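(* For $n\in\mathbb{N}$ let $a_n,b_n,c_n,d_n$ be real random variables with $c_n\ge0$, $d_n\ge0$ a.s., and let $(k_n)$ be a deterministic integer sequence with $k_n\to\infty$. Define $X_n=e^{ia_n-c_n}$, $x_n=\mathbb{E}[X_n]$, $Y_n=e^{ib_n-d_n}$, $y_n=\mathbb{E}[Y_n]$, $z_n=\mathbb{E}[X_nY_n]$. If $x_n-1=O(1/k_n)$, $y_n-1=o(1/k_n)$ and $z_n-1=O(1/k_n)$ as $n\to\infty$, then $z_n^{k_n}-x_n^{k_n}=o(1)$. *)

theory Defs
  imports "HOL-Probability.Probability" "HOL-Library.Landau_Symbols"
begin

end

theory Submission
  imports Defs
begin

text \<open>
  Write \<open>X\<^sub>n Y\<^sub>n - X\<^sub>n = (Y\<^sub>n - 1) + (X\<^sub>n - 1)(Y\<^sub>n - 1)\<close>. For a point \<open>u\<close> of the closed unit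
  disc, \<open>|u - 1|\<^sup>2 \<le> 2 Re (1 - u)\<close>, so weighted AM-GM bounds the product term by
  \<open>t Re (1 - X\<^sub>n) + Re (1 - Y\<^sub>n) / t\<close>. Taking expectations,
  \<open>|z\<^sub>n - x\<^sub>n| \<le> t |x\<^sub>n - 1| + (1 + 1/t) |y\<^sub>n - 1|\<close> for every \<open>t > 0\<close>; choosing \<open>t\<close> small
  gives \<open>z\<^sub>n - x\<^sub>n = o(1/k\<^sub>n)\<close>. Since \<open>x\<^sub>n\<close> and \<open>z\<^sub>n\<close> lie in the unit disc,
  \<open>|z\<^sub>n\<^sup>k - x\<^sub>n\<^sup>k| \<le> k |z\<^sub>n - x\<^sub>n|\<close>, which is \<open>o(1)\<close>.
\<close>

lemma norm_diff_one_squared_le: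
  fixes u :: complex
  assumes "norm u \<le> 1"
  shows "(norm (u - 1))\<^sup>2 \<le> 2 * Re (1 - u)"
proof -
  have "(Re u)\<^sup>2 + (Im u)\<^sup>2 \<le> 1"
    using power_le_one[OF norm_ge_zero assms, of 2] by (simp add: cmod_power2)
  moreover have "(norm (u - 1))\<^sup>2 = (Re u - 1)\<^sup>2 + (Im u)\<^sup>2"
    by (simp add: cmod_power2)
  ultimately show ?thesis
    by (simp add: power2_eq_square algebra_simps)
qed

lemma weighted_arith_geo_mean:
  fixes p q t :: real
  assumes "t > 0"
  shows "p * q \<le> (t * p\<^sup>2 + q\<^sup>2 / t) / 2"
proof -
  have "0 \<le> (t * p - q)\<^sup>2 / t"
    using assms by simp
  also have "\<dots> = t * p\<^sup>2 - 2 * p * q + q\<^sup>2 / t"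
    using assms by (simp add: power2_eq_square field_simps)
  finally show ?thesis by simp
qed

lemma norm_diff_one_mult_diff_one_le:
  fixes u v :: complex and t :: real
  assumes "norm u \<le> 1" "norm v \<le> 1" "t > 0"
  shows "norm ((u - 1) * (v - 1)) \<le> t * Re (1 - u) + Re (1 - v) / t"
proof -
  have "norm ((u - 1) * (v - 1)) \<le> (t * (norm (u - 1))\<^sup>2 + (norm (v - 1))\<^sup>2 / t) / 2"
    unfolding norm_mult by (rule weighted_arith_geo_mean[OF \<open>t > 0\<close>])
  also have "\<dots> \<le> (t * (2 * Re (1 - u)) + 2 * Re (1 - v) / t) / 2"
    using norm_diff_one_squared_le[OF assms(1)] norm_diff_one_squared_le[OF assms(2)] \<open>t > 0\<close>
    by (intro divide_right_mono add_mono mult_left_mono) auto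
  also have "\<dots> = t * Re (1 - u) + Re (1 - v) / t"
    by (simp add: field_simps)
  finally show ?thesis .
qed

lemma Re_one_minus_le_norm_diff_one: "Re (1 - w) \<le> norm (w - 1)"
  using complex_Re_le_cmod[of "1 - w"] by (simp add: norm_minus_commute)

lemma (in prob_space) norm_expectation_le_one:
  fixes U :: "'a \<Rightarrow> complex"
  assumes "U \<in> borel_measurable M" "AE \<omega> in M. norm (U \<omega>) \<le> 1"
  shows "norm (expectation U) \<le> 1"
proof -
  have "norm (expectation U) \<le> expectation (\<lambda>\<omega>. norm (U \<omega>))"
    by (rule integral_norm_bound)
  also have "\<dots> \<le> 1"
    using assms by (intro integral_le_const integrable_const_bound) auto
  finally show ?thesis .
qed

lemma (in prob_space) norm_expectation_mult_diff_le:
  fixes U V :: "'a \<Rightarrow> complex" and t :: real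
  assumes "U \<in> borel_measurable M" "V \<in> borel_measurable M"
    and U_le: "AE \<omega> in M. norm (U \<omega>) \<le> 1" and V_le: "AE \<omega> in M. norm (V \<omega>) \<le> 1"
    and "t > 0"
  shows "norm (expectation (\<lambda>\<omega>. U \<omega> * V \<omega>) - expectation U)
           \<le> t * norm (expectation U - 1) + (1 + 1 / t) * norm (expectation V - 1)"
proof -
  define W where "W \<omega> = (U \<omega> - 1) * (V \<omega> - 1)" for \<omega>
  define R where "R \<omega> = t * Re (1 - U \<omega>) + Re (1 - V \<omega>) / t" for \<omega>
  have UV_le: "AE \<omega> in M. norm (U \<omega> * V \<omega>) \<le> 1"
    using U_le V_le by eventually_elim (auto simp: norm_mult intro: mult_le_one)
  have [simp]: "integrable M U" "integrable M V" "integrable M (\<lambda>\<omega>. U \<omega> * V \<omega>)"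
    using assms UV_le by (auto intro!: integrable_const_bound)
  have W_eq: "W = (\<lambda>\<omega>. U \<omega> * V \<omega> - U \<omega> - V \<omega> + 1)"
    by (auto simp: W_def fun_eq_iff algebra_simps)
  have "expectation (\<lambda>\<omega>. U \<omega> * V \<omega>) - expectation U = (expectation V - 1) + expectation W"
    unfolding W_eq by (simp add: prob_space)
  then have "norm (expectation (\<lambda>\<omega>. U \<omega> * V \<omega>) - expectation U)
               \<le> norm (expectation V - 1) + norm (expectation W)"
    by (metis norm_triangle_ineq)
  moreover have "norm (expectation W) \<le> expectation R"
  proof -
    have "AE \<omega> in M. norm (W \<omega>) \<le> R \<omega>"
      using U_le V_le unfolding W_def R_def
      by eventually_elim (rule norm_diff_one_mult_diff_one_le[OF _ _ \<open>t > 0\<close>])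
    moreover have "integrable M W" "integrable M R"
      unfolding W_eq R_def by simp_all
    ultimately show ?thesis
      by (intro order_trans[OF integral_norm_bound] integral_mono_AE) auto
  qed
  moreover have "expectation R \<le> t * norm (expectation U - 1) + norm (expectation V - 1) / t"
  proof -
    have "expectation R = t * Re (1 - expectation U) + Re (1 - expectation V) / t"
      unfolding R_def by (simp add: prob_space)
    then show ?thesis
      using \<open>t > 0\<close> Re_one_minus_le_norm_diff_one
      by (simp add: add_mono divide_right_mono mult_left_mono)
  qed
  ultimately show ?thesis
    by (simp add: algebra_simps)
qed

lemma smallo_of_weighted_bounds:
  fixes u v w g :: "'a \<Rightarrow> 'b :: real_normed_field"
  assumes w_le: "\<And>t n. t > 0 \<Longrightarrow> norm (w n) \<le> t * norm (u n) + (1 + 1 / t) * norm (v n)"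
    and "u \<in> O[F](g)" and v: "v \<in> o[F](g)"
  shows "w \<in> o[F](g)"
proof (rule landau_o.smallI)
  fix \<epsilon> :: real
  assume "\<epsilon> > 0"
  obtain C where "C > 0" and u_le: "eventually (\<lambda>n. norm (u n) \<le> C * norm (g n)) F"
    using landau_o.bigE[OF \<open>u \<in> O[F](g)\<close>] by blast
  define t where "t = \<epsilon> / (2 * C)"
  define \<delta> where "\<delta> = \<epsilon> * t / (2 * (t + 1))"
  have "t > 0"
    using \<open>\<epsilon> > 0\<close> \<open>C > 0\<close> by (simp add: t_def)
  then have "\<delta> > 0"
    using \<open>\<epsilon> > 0\<close> by (simp add: \<delta>_def)
  have params: "t * C = \<epsilon> / 2" "(1 + 1 / t) * \<delta> = \<epsilon> / 2"
    using \<open>C > 0\<close> \<open>t > 0\<close> by (simp add: t_def, simp add: \<delta>_def divide_simps)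
  show "eventually (\<lambda>n. norm (w n) \<le> \<epsilon> * norm (g n)) F"
    using u_le landau_o.smallD[OF v \<open>\<delta> > 0\<close>]
  proof eventually_elim
    case (elim n)
    have "norm (w n) \<le> t * (C * norm (g n)) + (1 + 1 / t) * (\<delta> * norm (g n))"
      using elim \<open>t > 0\<close>
      by (intro order_trans[OF w_le[OF \<open>t > 0\<close>]] add_mono mult_left_mono) auto
    also have "\<dots> = (t * C + (1 + 1 / t) * \<delta>) * norm (g n)"
      by (simp only: distrib_right mult.assoc)
    also have "\<dots> = \<epsilon> * norm (g n)"
      by (simp only: params field_sum_of_halves)
    finally show ?case .
  qed
qed

lemma powi_diff_smallo_one:
  fixes z x :: "'a \<Rightarrow> complex" and k :: "'a \<Rightarrow> int"
  assumes "\<And>n. norm (z n) \<le> 1" "\<And>n. norm (x n) \<le> 1"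
    and k_pos: "eventually (\<lambda>n. k n > 0) F"
    and diff: "(\<lambda>n. z n - x n) \<in> o[F](\<lambda>n. 1 / of_int (k n))"
  shows "(\<lambda>n. z n powi k n - x n powi k n) \<in> o[F](\<lambda>_. 1)"
proof -
  have "(\<lambda>n. z n powi k n - x n powi k n) \<in> O[F](\<lambda>n. of_int (k n) * (z n - x n))"
  proof (rule landau_o.bigI[of 1])
    show "eventually (\<lambda>n. norm (z n powi k n - x n powi k n)
            \<le> 1 * norm (of_int (k n) * (z n - x n))) F"
      using k_pos
    proof eventually_elim
      case (elim n)
      then have "z n powi k n - x n powi k n = z n ^ nat (k n) - x n ^ nat (k n)"
        by (simp add: power_int_def)
      then show ?case
        using norm_power_diff[OF assms(1,2), where m = "nat (k n)"] elim
        by (simp add: norm_mult)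
    qed
  qed simp
  moreover have "(\<lambda>n. of_int (k n) * (z n - x n)) \<in> o[F](\<lambda>n. of_int (k n) * (1 / of_int (k n)))"
    by (rule landau_o.big_small_mult[OF landau_o.big_refl diff])
  moreover have "o[F](\<lambda>n. of_int (k n) * (1 / of_int (k n))) = o[F](\<lambda>_. 1 :: complex)"
    using k_pos by (intro landau_o.small.cong) (auto elim!: eventually_mono)
  ultimately show ?thesis
    using landau_o.big_small_trans by blast
qed

theorem lemmaA3:
  fixes M :: "'s measure"
    and a b c d :: "nat \<Rightarrow> 's \<Rightarrow> real"
    and k :: "nat \<Rightarrow> int"
    and X Y :: "nat \<Rightarrow> 's \<Rightarrow> complex"
    and x y z :: "nat \<Rightarrow> complex"
  assumes "prob_space M"
    and "\<And>n. a n \<in> borel_measurable M"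
    and "\<And>n. b n \<in> borel_measurable M"
    and "\<And>n. c n \<in> borel_measurable M"
    and "\<And>n. d n \<in> borel_measurable M"
    and "\<And>n. AE \<omega> in M. c n \<omega> \<ge> 0"
    and "\<And>n. AE \<omega> in M. d n \<omega> \<ge> 0"
    and "filterlim k at_top sequentially"
    and X_def: "\<And>n \<omega>. X n \<omega> = exp (\<i> * of_real (a n \<omega>) - of_real (c n \<omega>))"
    and Y_def: "\<And>n \<omega>. Y n \<omega> = exp (\<i> * of_real (b n \<omega>) - of_real (d n \<omega>))"
    and x_def: "\<And>n. x n = (LINT \<omega>|M. X n \<omega>)"
    and y_def: "\<And>n. y n = (LINT \<omega>|M. Y n \<omega>)"
    and z_def: "\<And>n. z n = (LINT \<omega>|M. X n \<omega> * Y n \<omega>)"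
    and "(\<lambda>n. x n - 1) \<in> O(\<lambda>n. 1 / of_int (k n))"
    and "(\<lambda>n. y n - 1) \<in> o(\<lambda>n. 1 / of_int (k n))"
    and "(\<lambda>n. z n - 1) \<in> O(\<lambda>n. 1 / of_int (k n))"
  shows "(\<lambda>n. z n powi k n - x n powi k n) \<in> o(\<lambda>n. 1)"
proof -
  interpret prob_space M by fact
  have X_meas: "X n \<in> borel_measurable M" and Y_meas: "Y n \<in> borel_measurable M" for n
    unfolding X_def[abs_def] Y_def[abs_def] using assms(2-5) by measurable
  have X_le: "AE \<omega> in M. norm (X n \<omega>) \<le> 1" and Y_le: "AE \<omega> in M. norm (Y n \<omega>) \<le> 1" for n
    using assms(6,7)[of n] by (auto elim!: eventually_mono simp: X_def Y_def norm_exp_eq_Re)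
  have XY_le: "AE \<omega> in M. norm (X n \<omega> * Y n \<omega>) \<le> 1" for n
    using X_le[of n] Y_le[of n] by eventually_elim (auto simp: norm_mult intro: mult_le_one)
  have "norm (z n) \<le> 1" "norm (x n) \<le> 1" for n
    unfolding x_def z_def using X_meas Y_meas X_le XY_le by (auto intro!: norm_expectation_le_one)
  moreover have "eventually (\<lambda>n. k n > 0) sequentially"
    using \<open>filterlim k at_top sequentially\<close>
    unfolding filterlim_at_top by (auto elim!: allE[of _ 1] eventually_mono)
  moreover have "(\<lambda>n. z n - x n) \<in> o(\<lambda>n. 1 / of_int (k n))"
    using assms(14,15) unfolding x_def y_def z_def
    by (rule smallo_of_weighted_bounds[rotated])
       (rule norm_expectation_mult_diff_le[OF X_meas Y_meas X_le Y_le])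
  ultimately show ?thesis
    by (rule powi_diff_smallo_one)
qed

end
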